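(* Let $I$ be a monomial ideal of $R=K[x_1,\ldots,x_d]$ ($K$ a field), and write its Newton polyhedron as $NP(I)=\{\mathbf{x}\in\mathbb{R}^d_+\mid \mathbf{a}_i\cdot\mathbf{x}\ge c_i \text{ for } 1\le i\le s\}$ with $\mathbf{a}_i\in\mathbb{N}^d$, $c_i\in\mathbb{N}$, $\gcd(\mathbf{a}_{i1},\ldots,\mathbf{a}_{id},c_i)=1$, where for each $i$ the set $F_i=\{\mathbf{x}\in NP(I)\mid \mathbf{a}_i\cdot\mathbf{x}=c_i\}$ is a facet of $NP(I)$, and $F_1,\ldots,F_s$ are the facets of $NP(I)$. For $r\in\mathbb{R}_+$ the following are equivalent: (1) $r$ is a jumping number for $I$; (2) for some $1\le i\le s$ with $c_i\neq0$ there exists a lattice point $\mathbf{p}\in r\cdot F_i\cap\mathbb{N}^d$; (3) for some $1\le i\le s$ with $c_i\neq0$ there exists $\mathbf{x}\in\mathbb{N}^d$ with $\mathbf{a}_i\cdot\mathbf{x}=rc_i$ and $\mathbf{a}_j\cdot\mathbf{x}\ge rc_j$ for all $1\le j\le s$, $j\neq i$.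
   Context: $\mathbb{R}_+$ denotes the non-negative reals, $\mathbb{N}$ the non-negative integers, and $\mathbf{x}^{\mathbf{a}}=x_1^{a_1}\cdots x_d^{a_d}$. $NP(I)$ is the convex hull in $\mathbb{R}^d$ of $\{\mathbf{a}\in\mathbb{N}^d\mid \mathbf{x}^{\mathbf{a}}\in I\}$ (a lattice polyhedron). Scaling means $r\cdot NP(I)=\{\mathbf{x}\in\mathbb{R}^d_+\mid \mathbf{a}_i\cdot\mathbf{x}\ge rc_i,\ 1\le i\le s\}$ and $r\cdot F_i=\{\mathbf{x}\in r\cdot NP(I)\mid \mathbf{a}_i\cdot\mathbf{x}=rc_i\}$. For real $t\ge0$, the $t$-th real power is $\overline{I^t}=(\{\mathbf{x}^{\mathbf{a}}\mid \mathbf{a}\in t\cdot NP(I)\cap\mathbb{N}^d\})$, and $\overline{I^{>r}}=\bigcup_{t>r}\overline{I^t}$. A jumping number for $I$ is a real $r\ge0$ with $\overline{I^r}\neq\overline{I^{>r}}$. *)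

theory Defs
  imports "HOL-Analysis.Analysis"
begin

text \<open>Exponent vectors of monomials x^a in K[x_1..x_d] are identified with lattice
  points of R^d (index type 'd, d = CARD('d)).  A monomial ideal I is identified with
  its set of exponents {a. x^a in I}, an upward-closed subset of N^d.\<close>

definition lattice_pts :: "(real^'d) set" where
  "lattice_pts = {x. \<forall>j. x $ j \<in> \<nat>}"

definition monomial_ideal_exps :: "(real^'d) set \<Rightarrow> bool" where
  "monomial_ideal_exps E \<longleftrightarrow> E \<subseteq> lattice_pts \<and>
     (\<forall>p\<in>E. \<forall>q\<in>lattice_pts. (\<forall>j. p $ j \<le> q $ j) \<longrightarrow> q \<in> E)"

definition gen_exps :: "(real^'d) set \<Rightarrow> (real^'d) set" where
  "gen_exps S = {q \<in> lattice_pts. \<exists>p\<in>S. \<forall>j. p $ j \<le> q $ j}"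

definition NP :: "(real^'d) set \<Rightarrow> (real^'d) set" where
  "NP E = convex hull E"

definition dotp :: "nat^'d \<Rightarrow> real^'d \<Rightarrow> real" where
  "dotp a x = (\<Sum>j\<in>UNIV. real (a $ j) * x $ j)"

definition scaled_NP :: "(nat \<Rightarrow> nat^'d) \<Rightarrow> (nat \<Rightarrow> nat) \<Rightarrow> nat \<Rightarrow> real \<Rightarrow> (real^'d) set" where
  "scaled_NP a c s r = {x. (\<forall>j. 0 \<le> x $ j) \<and> (\<forall>i\<in>{1..s}. r * real (c i) \<le> dotp (a i) x)}"

definition scaled_facet :: "(nat \<Rightarrow> nat^'d) \<Rightarrow> (nat \<Rightarrow> nat) \<Rightarrow> nat \<Rightarrow> real \<Rightarrow> nat \<Rightarrow> (real^'d) set" where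
  "scaled_facet a c s r i = {x \<in> scaled_NP a c s r. dotp (a i) x = r * real (c i)}"

definition real_power :: "(nat \<Rightarrow> nat^'d) \<Rightarrow> (nat \<Rightarrow> nat) \<Rightarrow> nat \<Rightarrow> real \<Rightarrow> (real^'d) set" where
  "real_power a c s t = gen_exps (scaled_NP a c s t \<inter> lattice_pts)"

definition real_power_gt :: "(nat \<Rightarrow> nat^'d) \<Rightarrow> (nat \<Rightarrow> nat) \<Rightarrow> nat \<Rightarrow> real \<Rightarrow> (real^'d) set" where
  "real_power_gt a c s r = (\<Union>t\<in>{r<..}. real_power a c s t)"

definition jumping_number :: "(nat \<Rightarrow> nat^'d) \<Rightarrow> (nat \<Rightarrow> nat) \<Rightarrow> nat \<Rightarrow> real \<Rightarrow> bool" where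
  "jumping_number a c s r \<longleftrightarrow> 0 \<le> r \<and> real_power a c s r \<noteq> real_power_gt a c s r"

end

theory Submission
  imports Defs
begin

text \<open>Since r \<cdot> NP(I) is upward closed, the exponent set of the t-th real power is just the
  set of lattice points of t \<cdot> NP(I), and these sets shrink as t grows. A lattice point of
  r \<cdot> NP(I) lying on a facet r \<cdot> F_i with c_i \<noteq> 0 leaves t \<cdot> NP(I) for every t > r, so r is a
  jumping number. Conversely, a point strictly inside every such supporting half-space
  has positive slack in finitely many inequalities, hence stays in t \<cdot> NP(I) for some t > r.\<close>

lemma lattice_pts_nonneg: "x \<in> lattice_pts \<Longrightarrow> 0 \<le> x $ j"
  unfolding lattice_pts_def by (metis (mono_tags) Nats_cases mem_Collect_eq of_nat_0_le_iff)

lemma dotp_nonneg: "(\<And>j. 0 \<le> x $ j) \<Longrightarrow> 0 \<le> dotp a x"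
  unfolding dotp_def by (intro sum_nonneg) simp

lemma dotp_mono: "(\<And>j. p $ j \<le> q $ j) \<Longrightarrow> dotp a p \<le> dotp a q"
  unfolding dotp_def by (intro sum_mono mult_left_mono) auto

lemma scaled_NP_antimono:
  assumes "r \<le> t"
  shows "scaled_NP a c s t \<subseteq> scaled_NP a c s r"
proof
  fix x assume "x \<in> scaled_NP a c s t"
  moreover have "r * real (c i) \<le> t * real (c i)" for i
    using assms by (intro mult_right_mono) auto
  ultimately show "x \<in> scaled_NP a c s r"
    unfolding scaled_NP_def by (auto intro: order_trans)
qed

lemma scaled_NP_upward_closed:
  assumes "p \<in> scaled_NP a c s r" "\<And>j. p $ j \<le> q $ j"
  shows "q \<in> scaled_NP a c s r"
  using assms dotp_mono[of p q] unfolding scaled_NP_def by (auto intro: order_trans)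

lemma real_power_eq: "real_power a c s r = scaled_NP a c s r \<inter> lattice_pts"
  unfolding real_power_def gen_exps_def by (auto intro: scaled_NP_upward_closed)

lemma real_power_gt_subset: "real_power_gt a c s r \<subseteq> real_power a c s r"
  unfolding real_power_gt_def real_power_eq
  using scaled_NP_antimono[of r, OF less_imp_le] by blast

lemma jumping_number_iff_lattice_point_leaving_scaled_NP:
  "jumping_number a c s r \<longleftrightarrow>
    0 \<le> r \<and> (\<exists>q \<in> scaled_NP a c s r \<inter> lattice_pts. \<forall>t>r. q \<notin> scaled_NP a c s t)"
  using real_power_gt_subset[of a c s r]
  unfolding jumping_number_def real_power_gt_def real_power_eq by blast

lemma not_in_larger_scaled_NP_if_on_facet:
  assumes "x \<in> scaled_facet a c s r i" "i \<in> {1..s}" "c i \<noteq> 0" "r < t"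
  shows "x \<notin> scaled_NP a c s t"
proof
  assume "x \<in> scaled_NP a c s t"
  then have "t * real (c i) \<le> dotp (a i) x"
    using assms(2) unfolding scaled_NP_def by blast
  also have "\<dots> = r * real (c i)"
    using assms(1) unfolding scaled_facet_def by blast
  finally show False
    using assms(3,4) by simp
qed

lemma strict_if_not_on_facet:
  assumes "q \<in> scaled_NP a c s r" "q \<notin> scaled_facet a c s r i" "i \<in> {1..s}"
  shows "r * real (c i) < dotp (a i) q"
  using assms unfolding scaled_facet_def scaled_NP_def by fastforce

lemma in_larger_scaled_NP_if_strict:
  assumes nonneg: "\<And>j. 0 \<le> x $ j"
    and strict: "\<And>i. i \<in> {1..s} \<Longrightarrow> c i \<noteq> 0 \<Longrightarrow> r * real (c i) < dotp (a i) x"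
  shows "\<exists>t>r. x \<in> scaled_NP a c s t"
proof -
  define S where "S = {i \<in> {1..s}. c i \<noteq> 0}"
  define T where "T = insert (r + 1) ((\<lambda>i. dotp (a i) x / real (c i)) ` S)"
  have "finite T"
    unfolding T_def S_def by simp
  have "r < u" if "u \<in> T" for u
    using that strict unfolding T_def S_def by (auto simp: field_simps)
  then have "r < Min T"
    using \<open>finite T\<close> by (simp add: T_def)
  moreover have "x \<in> scaled_NP a c s (Min T)"
    unfolding scaled_NP_def
  proof (intro CollectI conjI allI ballI nonneg)
    fix i assume i: "i \<in> {1..s}"
    show "Min T * real (c i) \<le> dotp (a i) x"
    proof (cases "c i = 0")
      case True
      then show ?thesis using dotp_nonneg[OF nonneg] by simp
    next
      case False
      then have "Min T \<le> dotp (a i) x / real (c i)"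
        using i \<open>finite T\<close> unfolding T_def S_def by (intro Min_le) auto
      then show ?thesis
        using False by (simp add: field_simps)
    qed
  qed
  ultimately show ?thesis by blast
qed

lemma jumping_number_iff_lattice_point_on_facet:
  assumes "0 \<le> r"
  shows "jumping_number a c s r \<longleftrightarrow>
    (\<exists>i\<in>{1..s}. c i \<noteq> 0 \<and> (\<exists>p. p \<in> scaled_facet a c s r i \<inter> lattice_pts))"
    (is "_ \<longleftrightarrow> ?on_facet")
proof -
  have "jumping_number a c s r \<longleftrightarrow>
      (\<exists>q \<in> scaled_NP a c s r \<inter> lattice_pts. \<forall>t>r. q \<notin> scaled_NP a c s t)"
    using assms jumping_number_iff_lattice_point_leaving_scaled_NP by blast
  also have "\<dots> \<longleftrightarrow> ?on_facet"
  proof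
    assume "\<exists>q \<in> scaled_NP a c s r \<inter> lattice_pts. \<forall>t>r. q \<notin> scaled_NP a c s t"
    then obtain q where q: "q \<in> scaled_NP a c s r" "q \<in> lattice_pts"
      and stuck: "\<And>t. r < t \<Longrightarrow> q \<notin> scaled_NP a c s t"
      by blast
    show ?on_facet
    proof (rule ccontr)
      assume "\<not> ?on_facet"
      then have "r * real (c i) < dotp (a i) q" if "i \<in> {1..s}" "c i \<noteq> 0" for i
        using that q strict_if_not_on_facet by blast
      then show False
        using in_larger_scaled_NP_if_strict[of q s c r a] stuck lattice_pts_nonneg[OF q(2)]
        by blast
    qed
  next
    assume ?on_facet
    then obtain i p where i: "i \<in> {1..s}" "c i \<noteq> 0"
      and p: "p \<in> scaled_facet a c s r i" "p \<in> lattice_pts"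
      by blast
    then have "p \<in> scaled_NP a c s r"
      unfolding scaled_facet_def by blast
    with p i not_in_larger_scaled_NP_if_on_facet
    show "\<exists>q \<in> scaled_NP a c s r \<inter> lattice_pts. \<forall>t>r. q \<notin> scaled_NP a c s t"
      by blast
  qed
  finally show ?thesis .
qed

lemma lattice_pt_in_scaled_facet_iff:
  assumes "x \<in> lattice_pts" "i \<in> {1..s}"
  shows "x \<in> scaled_facet a c s r i \<longleftrightarrow>
    dotp (a i) x = r * real (c i) \<and> (\<forall>j\<in>{1..s}. j \<noteq> i \<longrightarrow> r * real (c j) \<le> dotp (a j) x)"
  using assms(2) lattice_pts_nonneg[OF assms(1)]
  unfolding scaled_facet_def scaled_NP_def by auto

lemma lattice_point_on_facet_iff:
  "(\<exists>i\<in>{1..s}. c i \<noteq> 0 \<and> (\<exists>p. p \<in> scaled_facet a c s r i \<inter> lattice_pts)) \<longleftrightarrow>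
   (\<exists>i\<in>{1..s}. c i \<noteq> 0 \<and> (\<exists>x\<in>lattice_pts. dotp (a i) x = r * real (c i) \<and>
      (\<forall>j\<in>{1..s}. j \<noteq> i \<longrightarrow> r * real (c j) \<le> dotp (a j) x)))"
  using lattice_pt_in_scaled_facet_iff by blast

theorem proposition5p8:
  fixes E :: "(real^'d) set"
    and a :: "nat \<Rightarrow> nat^'d" and c :: "nat \<Rightarrow> nat" and s :: nat and r :: real
  assumes mono: "monomial_ideal_exps E"
    and NP_eq: "NP E = scaled_NP a c s 1"
    and gcd1: "\<And>i. i \<in> {1..s} \<Longrightarrow> Gcd (insert (c i) (range (\<lambda>j. a i $ j))) = 1"
    and facets: "\<And>i. i \<in> {1..s} \<Longrightarrow> scaled_facet a c s 1 i facet_of NP E"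
    and all_facets: "{F. F facet_of NP E} = (\<lambda>i. scaled_facet a c s 1 i) ` {1..s}"
    and r: "0 \<le> r"
  shows "(jumping_number a c s r \<longleftrightarrow>
            (\<exists>i\<in>{1..s}. c i \<noteq> 0 \<and> (\<exists>p. p \<in> scaled_facet a c s r i \<inter> lattice_pts)))
       \<and> ((\<exists>i\<in>{1..s}. c i \<noteq> 0 \<and> (\<exists>p. p \<in> scaled_facet a c s r i \<inter> lattice_pts)) \<longleftrightarrow>
            (\<exists>i\<in>{1..s}. c i \<noteq> 0 \<and> (\<exists>x\<in>lattice_pts. dotp (a i) x = r * real (c i) \<and>
               (\<forall>j\<in>{1..s}. j \<noteq> i \<longrightarrow> r * real (c j) \<le> dotp (a j) x))))"
  using jumping_number_iff_lattice_point_on_facet[OF r] lattice_point_on_facet_iff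
  by (rule conjI)

end
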